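(* In the setting described in the context, fix $i\in[m]$, $b_{i0}\in\mathbb{R}$, $b_i\in\mathbb{R}^n$, and let $z_i^L=\min_{x\in P}\frac{b_{i0}+b_i^\top x}{a_{i0}+a_i^\top x}$, $z_i^U=\max_{x\in P}\frac{b_{i0}+b_i^\top x}{a_{i0}+a_i^\top x}$, $d_i^L=\min_{x\in P}(a_{i0}+a_i^\top x)>0$, $d_i^U=\max_{x\in P}(a_{i0}+a_i^\top x)$. Then every $(\rho,y,x)\in\mathcal{R}_{\mathrm{QP}}$, with $\zeta_i:=b_{i0}\rho^i+b_i^\top y^i$ and $\delta_i:=a_{i0}+a_i^\top x$, satisfies the McCormick inequalities obtained by relaxing $\zeta_i\delta_i=b_{i0}+b_i^\top x$: \[ \begin{aligned} b_{i0}+b_i^\top x&\ge z_i^L\delta_i+d_i^L\zeta_i-z_i^Ld_i^L, & b_{i0}+b_i^\top x&\ge z_i^U\delta_i+d_i^U\zeta_i-z_i^Ud_i^U,\\ b_{i0}+b_i^\top x&\le z_i^U\delta_i+d_i^L\zeta_i-z_i^Ud_i^L, & b_{i0}+b_i^\top x&\le z_i^L\delta_i+d_i^U\zeta_i-z_i^Ld_i^U. \end{aligned} \]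
   Context: Let $m,n,p$ be integers with $0\le p\le n$, $a_{i0}\in\mathbb{R}$, $a_i\in\mathbb{R}^n$ ($i\in[m]$), and let $\bar Cx\le\bar d$ be a linear system that includes $0\le x_j\le1$ for $j\in[p]$. Let $P=\{x\mid\bar Cx\le\bar d\}$, assumed nonempty and bounded, with $a_{i0}+a_i^\top x>0$ on $P$ for all $i$. $\mathcal{R}_{\mathrm{QP}}$ is the set of $(\rho,y,x)$, $\rho=(\rho^i)_{i\in[m]}$, $y=(y^i)_{i\in[m]}$, $y^i\in\mathbb{R}^n$, $x\in\mathbb{R}^n$, for which there exist $W^1,\dots,W^m\in\mathbb{R}^{n\times n}$ with, for all $i\in[m]$: $\bar CW^i\bar C^\top-\bar d(y^i)^\top\bar C^\top-\bar Cy^i\bar d^\top+\rho^i\bar d\bar d^\top\ge0$ (entrywise); $a_{i0}\rho^i+a_i^\top y^i=1$; $\rho^i\ge0$; $x_j=a_{i0}y^i_j+\sum_{k=1}^na_{ik}W^i_{jk}$ for $j\in[n]$; $\bar Cy^i\le\rho^i\bar d$; $W^i_{jj}=y^i_j$ for $j\in[p]$; and $\bar Cx\le\bar d$. *)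

theory Defs
  imports Complex_Main
begin

text \<open>Vectors in R^n are functions nat => real, only indices 0..n-1 matter (0-based).
  Matrix Cbar has r rows: C k j for k < r, j < n; dbar is d k for k < r.\<close>

definition matvec :: "nat \<Rightarrow> (nat \<Rightarrow> nat \<Rightarrow> real) \<Rightarrow> (nat \<Rightarrow> real) \<Rightarrow> nat \<Rightarrow> real" where
  "matvec n C v k = (\<Sum>j<n. C k j * v j)"

definition dotp :: "nat \<Rightarrow> (nat \<Rightarrow> real) \<Rightarrow> (nat \<Rightarrow> real) \<Rightarrow> real" where
  "dotp n u v = (\<Sum>j<n. u j * v j)"

definition polyP :: "nat \<Rightarrow> nat \<Rightarrow> (nat \<Rightarrow> nat \<Rightarrow> real) \<Rightarrow> (nat \<Rightarrow> real) \<Rightarrow> (nat \<Rightarrow> real) set" where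
  "polyP n r C d = {x. (\<forall>j\<ge>n. x j = 0) \<and> (\<forall>k<r. matvec n C x k \<le> d k)}"

text \<open>The system contains 0 <= x_j <= 1 for j in [p].\<close>
definition contains_box :: "nat \<Rightarrow> nat \<Rightarrow> nat \<Rightarrow> (nat \<Rightarrow> nat \<Rightarrow> real) \<Rightarrow> (nat \<Rightarrow> real) \<Rightarrow> bool" where
  "contains_box n p r C d \<longleftrightarrow>
     (\<forall>j<p. (\<exists>k<r. (\<forall>l<n. C k l = (if l = j then -1 else 0)) \<and> d k = 0)
          \<and> (\<exists>k<r. (\<forall>l<n. C k l = (if l = j then 1 else 0)) \<and> d k = 1))"

definition RQP ::
  "nat \<Rightarrow> nat \<Rightarrow> nat \<Rightarrow> nat \<Rightarrow> (nat \<Rightarrow> nat \<Rightarrow> real) \<Rightarrow> (nat \<Rightarrow> real)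
   \<Rightarrow> (nat \<Rightarrow> real) \<Rightarrow> (nat \<Rightarrow> nat \<Rightarrow> real)
   \<Rightarrow> ((nat \<Rightarrow> real) \<times> (nat \<Rightarrow> nat \<Rightarrow> real) \<times> (nat \<Rightarrow> real)) set" where
  "RQP m n p r C d a0 a = {(rho, y, x). \<exists>W :: nat \<Rightarrow> nat \<Rightarrow> nat \<Rightarrow> real.
     (\<forall>i<m.
        (\<forall>k<r. \<forall>l<r.
           (\<Sum>j<n. \<Sum>h<n. C k j * W i j h * C l h)
           - d k * matvec n C (y i) l - matvec n C (y i) k * d l
           + rho i * d k * d l \<ge> 0)
      \<and> a0 i * rho i + dotp n (a i) (y i) = 1
      \<and> rho i \<ge> 0
      \<and> (\<forall>j<n. x j = a0 i * y i j + (\<Sum>k<n. a i k * W i j k))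
      \<and> (\<forall>k<r. matvec n C (y i) k \<le> rho i * d k)
      \<and> (\<forall>j<p. W i j j = y i j))
     \<and> (\<forall>k<r. matvec n C x k \<le> d k)}"

end

theory Submission
  imports Defs
begin

text \<open>Write \<open>\<delta>(v) = a\<^sub>0 + a\<^sup>T v\<close> and \<open>\<nu>(v) = b\<^sub>0 + b\<^sup>T v\<close>. On \<open>P\<close> the affine inequalities
  \<open>\<delta> - d\<^sup>L \<ge> 0\<close>, \<open>d\<^sup>U - \<delta> \<ge> 0\<close>, \<open>\<nu> - z\<^sup>L \<delta> \<ge> 0\<close> and \<open>z\<^sup>U \<delta> - \<nu> \<ge> 0\<close> are valid, so by the affine
  Farkas lemma each is a nonnegative combination of \<open>1\<close> and the rows \<open>d\<^sub>k - C\<^sub>k v\<close>. The product of two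
  such inequalities, linearized in the perspective variables \<open>\<rho> = 1/\<delta>\<close>, \<open>y = v/\<delta>\<close>, \<open>W = v v\<^sup>T/\<delta>\<close>,
  is then a nonnegative combination of the RLT constraints defining \<open>R\<^sub>Q\<^sub>P\<close>. For a factor in \<open>\<delta>\<close> the
  linearization collapses, via \<open>x = a\<^sub>0 y + W a\<close> and \<open>a\<^sub>0 \<rho> + a\<^sup>T y = 1\<close>, to an expression in
  \<open>x\<close> and \<open>\<zeta>\<close> alone, which is the McCormick inequality. The bounds \<open>z\<^sup>L, z\<^sup>U, d\<^sup>L, d\<^sup>U\<close> are finite
  because \<open>P\<close> is bounded and \<open>\<delta>\<close> is bounded away from \<open>0\<close> on \<open>P\<close> (once more by Farkas).\<close>

definition in_cone :: "nat \<Rightarrow> (nat \<Rightarrow> nat \<Rightarrow> real) \<Rightarrow> nat set \<Rightarrow> (nat \<Rightarrow> real) \<Rightarrow> bool" where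
  "in_cone N A K b \<longleftrightarrow> (\<exists>lam. (\<forall>k\<in>K. lam k \<ge> 0) \<and> (\<forall>j<N. b j = (\<Sum>k\<in>K. lam k * A k j)))"

lemma in_cone_mono:
  assumes "in_cone N A K b" "K \<subseteq> K'" "finite K'"
  shows "in_cone N A K' b"
proof -
  obtain lam where lam: "\<forall>k\<in>K. lam k \<ge> 0" "\<forall>j<N. b j = (\<Sum>k\<in>K. lam k * A k j)"
    using assms(1) unfolding in_cone_def by blast
  define lam' where "lam' k = (if k \<in> K then lam k else 0)" for k
  have "(\<Sum>k\<in>K'. lam' k * A k j) = (\<Sum>k\<in>K. lam k * A k j)" for j
    using assms(2,3) by (intro sum.mono_neutral_cong_right) (auto simp: lam'_def)
  then show ?thesis
    unfolding in_cone_def using lam by (intro exI[of _ lam']) (auto simp: lam'_def)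
qed

lemma dotp_diff_left: "dotp N (\<lambda>j. s * f j - t * g j) w = s * dotp N f w - t * dotp N g w"
  by (simp add: dotp_def sum_subtractf sum_distrib_left algebra_simps)

lemma dotp_diff_right: "dotp N u (\<lambda>j. w j - t * v j) = dotp N u w - t * dotp N u v"
  by (simp add: dotp_def sum_subtractf sum_distrib_left algebra_simps)

definition project_along :: "nat \<Rightarrow> (nat \<Rightarrow> real) \<Rightarrow> (nat \<Rightarrow> real) \<Rightarrow> (nat \<Rightarrow> real) \<Rightarrow> nat \<Rightarrow> real" where
  "project_along N v g u = (\<lambda>j. dotp N u v * g j - dotp N g v * u j)"

lemma dotp_project_along:
  assumes "dotp N g v \<noteq> 0"
  shows "dotp N (project_along N v g u) w
         = - dotp N g v * dotp N u (\<lambda>j. w j - dotp N g w / dotp N g v * v j)"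
  using assms unfolding project_along_def dotp_diff_left dotp_diff_right
  by (simp add: field_simps)

lemma in_cone_insert_of_projected:
  assumes "finite K" "a \<notin> K"
    and av: "dotp N (A a) v < 0" and Kv: "\<forall>k\<in>K. dotp N (A k) v \<ge> 0" and bv: "dotp N b v < 0"
    and "in_cone N (\<lambda>k. project_along N v (A a) (A k)) K (project_along N v (A a) b)"
  shows "in_cone N A (insert a K) b"
proof -
  obtain lam where lam: "\<forall>k\<in>K. lam k \<ge> 0"
    "\<forall>j<N. project_along N v (A a) b j = (\<Sum>k\<in>K. lam k * project_along N v (A a) (A k) j)"
    using assms(6) unfolding in_cone_def by blast
  define S where "S = (\<Sum>k\<in>K. lam k * dotp N (A k) v)"
  define la where "la = (dotp N b v - S) / dotp N (A a) v"
  have "S \<ge> 0" unfolding S_def using lam(1) Kv by (intro sum_nonneg) auto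
  then have la: "la \<ge> 0" unfolding la_def using av bv by (intro divide_nonpos_neg) auto
  have "b j = la * A a j + (\<Sum>k\<in>K. lam k * A k j)" if "j < N" for j
  proof -
    have "dotp N b v * A a j - dotp N (A a) v * b j
          = S * A a j - dotp N (A a) v * (\<Sum>k\<in>K. lam k * A k j)"
      using lam(2) that unfolding project_along_def S_def
      by (simp add: sum_subtractf sum_distrib_left sum_distrib_right algebra_simps)
    then show ?thesis unfolding la_def using av by (simp add: field_simps)
  qed
  moreover have "(\<Sum>k\<in>K. (lam(a := la)) k * A k j) = (\<Sum>k\<in>K. lam k * A k j)" for j
    using assms(2) by (intro sum.cong) auto
  ultimately show ?thesis
    unfolding in_cone_def using assms(1,2) lam(1) la
    by (intro exI[of _ "lam(a := la)"]) auto
qed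

lemma separator_of_projected:
  assumes av: "dotp N (A a) v < 0"
    and "\<forall>k\<in>K. dotp N (project_along N v (A a) (A k)) w \<ge> 0"
    and "dotp N (project_along N v (A a) b) w < 0"
  shows "\<exists>z. (\<forall>k\<in>insert a K. dotp N (A k) z \<ge> 0) \<and> dotp N b z < 0"
proof -
  define z where "z = (\<lambda>j. w j - dotp N (A a) w / dotp N (A a) v * v j)"
  have proj: "dotp N (project_along N v (A a) u) w = - dotp N (A a) v * dotp N u z" for u
    unfolding z_def using av by (intro dotp_project_along) simp
  have "dotp N (A a) z = 0"
    unfolding z_def dotp_diff_right using av by simp
  moreover have "dotp N (A k) z \<ge> 0" if "k \<in> K" for k
    using assms(2) that av unfolding proj by (simp add: mult_le_0_iff)
  moreover have "dotp N b z < 0"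
    using assms(3) av unfolding proj by (simp add: zero_less_mult_iff)
  ultimately show ?thesis by (intro exI[of _ z]) auto
qed

text \<open>Fourier--Motzkin style induction on the number of generators: if the new generator
  \<open>A a\<close> is not already separated by \<open>v\<close>, project everything along \<open>A a\<close> onto the hyperplane
  \<open>v\<^sup>\<bottom>\<close> and separate there.\<close>
lemma farkas_cone:
  assumes "finite K" "\<not> in_cone N A K b"
  shows "\<exists>v. (\<forall>k\<in>K. dotp N (A k) v \<ge> 0) \<and> dotp N b v < 0"
  using assms
proof (induction K arbitrary: A b rule: finite_induct)
  case empty
  then obtain j0 where "j0 < N" "b j0 \<noteq> 0" by (auto simp: in_cone_def)
  then have "(\<Sum>j<N. b j * b j) > 0" by (intro sum_pos2[of _ j0]) (auto simp: zero_less_mult_iff)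
  then have "dotp N b (\<lambda>j. - b j) < 0" by (simp add: dotp_def sum_negf)
  then show ?case by blast
next
  case (insert a K)
  have "\<not> in_cone N A K b"
    using insert.prems insert.hyps(1) in_cone_mono[of N A K b "insert a K"] by blast
  with insert.IH obtain v where v: "\<forall>k\<in>K. dotp N (A k) v \<ge> 0" "dotp N b v < 0" by blast
  show ?case
  proof (cases "dotp N (A a) v \<ge> 0")
    case True
    with v show ?thesis by auto
  next
    case False
    then have av: "dotp N (A a) v < 0" by simp
    have "\<not> in_cone N (\<lambda>k. project_along N v (A a) (A k)) K (project_along N v (A a) b)"
      using in_cone_insert_of_projected[OF insert.hyps av v(1) v(2)] insert.prems by blast
    with insert.IH obtain w where
      "\<forall>k\<in>K. dotp N (project_along N v (A a) (A k)) w \<ge> 0"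
      "dotp N (project_along N v (A a) b) w < 0" by blast
    then show ?thesis using separator_of_projected[of N A a v K w b] av by blast
  qed
qed

lemma dotp_Suc: "dotp (Suc n) u v = dotp n u v + u n * v n"
  by (simp add: dotp_def)

lemma dotp_divide_right: "dotp n u (\<lambda>j. v j / t) = dotp n u v / t"
  by (simp add: dotp_def sum_divide_distrib)

lemma dotp_add_right: "dotp n u (\<lambda>j. v j + s * w j) = dotp n u v + s * dotp n u w"
  by (simp add: dotp_def sum.distrib sum_distrib_left algebra_simps)

text \<open>Apply \<open>farkas_cone\<close> in dimension \<open>n + 1\<close> to the generators \<open>(- G\<^sub>k, c\<^sub>k)\<close> and \<open>(0, 1)\<close>; the last
  coordinate \<open>t\<close> plays the role of the constant 1.\<close>
lemma farkas_homogenized: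
  fixes R n :: nat
  assumes "\<And>u t. t \<ge> 0 \<Longrightarrow> \<forall>k<R. dotp n (G k) u \<le> c k * t \<Longrightarrow> f0 * t + dotp n f u \<ge> 0"
  shows "\<exists>lam0 lam. lam0 \<ge> 0 \<and> (\<forall>k<R. lam k \<ge> 0) \<and> f0 = lam0 + (\<Sum>k<R. lam k * c k)
           \<and> (\<forall>j<n. f j = (\<Sum>k<R. lam k * - G k j))"
proof -
  define A :: "nat \<Rightarrow> nat \<Rightarrow> real" where "A k j = (if k < R then if j < n then - G k j else if j = n then c k else 0
                           else if j = n then 1 else 0)" for k j
  define b where "b j = (if j < n then f j else if j = n then f0 else 0)" for j
  have "in_cone (Suc n) A {..<Suc R} b"
  proof (rule ccontr)
    assume "\<not> in_cone (Suc n) A {..<Suc R} b"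
    then obtain u where u: "\<forall>k\<in>{..<Suc R}. dotp (Suc n) (A k) u \<ge> 0" "dotp (Suc n) b u < 0"
      using farkas_cone by blast
    have row: "dotp (Suc n) (A k) u = c k * u n - dotp n (G k) u" if "k < R" for k
      using that by (simp add: dotp_Suc A_def dotp_def sum_negf)
    have rows: "\<forall>k<R. dotp n (G k) u \<le> c k * u n"
    proof (intro allI impI)
      fix k assume "k < R"
      then have "dotp (Suc n) (A k) u \<ge> 0" using u(1) by simp
      with row[OF \<open>k < R\<close>] show "dotp n (G k) u \<le> c k * u n" by simp
    qed
    have "dotp (Suc n) (A R) u = u n"
      by (simp add: dotp_Suc A_def dotp_def)
    moreover have "dotp (Suc n) (A R) u \<ge> 0" using u(1) by (meson lessI lessThan_iff)
    ultimately have "f0 * u n + dotp n f u \<ge> 0" using rows assms by simp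
    moreover have "dotp (Suc n) b u = f0 * u n + dotp n f u"
      by (simp add: dotp_Suc b_def dotp_def)
    ultimately show False using u(2) by linarith
  qed
  then obtain lam where lam: "\<forall>k<Suc R. lam k \<ge> 0" "\<forall>j<Suc n. b j = (\<Sum>k<Suc R. lam k * A k j)"
    unfolding in_cone_def by auto
  have "f j = (\<Sum>k<R. lam k * - G k j)" if "j < n" for j
    using lam(2)[rule_format, of j] that by (simp add: A_def b_def)
  moreover have "f0 = lam R + (\<Sum>k<R. lam k * c k)"
    using lam(2)[rule_format, of n] by (simp add: A_def b_def)
  ultimately show ?thesis using lam(1) by (intro exI[of _ "lam R"] exI[of _ lam]) auto
qed

lemma affine_farkas:
  fixes R n :: nat
  assumes feasible: "\<forall>k<R. dotp n (G k) v0 \<le> c k"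
    and valid: "\<And>v. \<forall>k<R. dotp n (G k) v \<le> c k \<Longrightarrow> f0 + dotp n f v \<ge> 0"
  shows "\<exists>lam0 lam. lam0 \<ge> 0 \<and> (\<forall>k<R. lam k \<ge> 0) \<and> f0 = lam0 + (\<Sum>k<R. lam k * c k)
           \<and> (\<forall>j<n. f j = (\<Sum>k<R. lam k * - G k j))"
proof (rule farkas_homogenized)
  fix u and t :: real
  assume t: "t \<ge> 0" and u: "\<forall>k<R. dotp n (G k) u \<le> c k * t"
  show "f0 * t + dotp n f u \<ge> 0"
  proof (cases "t = 0")
    case False
    with t have "t > 0" by simp
    with u have "\<forall>k<R. dotp n (G k) (\<lambda>j. u j / t) \<le> c k"
      by (simp add: dotp_divide_right divide_le_eq)
    then have "f0 + dotp n f u / t \<ge> 0" using valid dotp_divide_right by metis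
    with \<open>t > 0\<close> show ?thesis by (simp add: field_simps)
  next
    case True
    show ?thesis
    proof (rule ccontr)
      assume "\<not> ?thesis"
      with True have fu: "dotp n f u < 0" by simp
      \<comment> \<open>\<open>u\<close> is a recession direction along which \<open>f\<close> decreases without bound\<close>
      define s where "s = (f0 + dotp n f v0 + 1) / - dotp n f u"
      have "f0 + dotp n f v0 \<ge> 0" using valid feasible by blast
      with fu have "s \<ge> 0" unfolding s_def by (simp add: divide_nonneg_neg)
      have "dotp n (G k) (\<lambda>j. v0 j + s * u j) \<le> c k" if "k < R" for k
      proof -
        have "dotp n (G k) u \<le> 0" using u that True by simp
        with \<open>s \<ge> 0\<close> have "s * dotp n (G k) u \<le> 0" by (rule mult_nonneg_nonpos)
        moreover have "dotp n (G k) v0 \<le> c k" using feasible that by simp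
        ultimately show ?thesis by (simp add: dotp_add_right)
      qed
      then have "f0 + dotp n f (\<lambda>j. v0 j + s * u j) \<ge> 0" using valid by blast
      moreover have "f0 + dotp n f (\<lambda>j. v0 j + s * u j) = -1"
        unfolding dotp_add_right s_def using fu by (simp add: field_simps)
      ultimately show False by simp
    qed
  qed
qed

lemma affine_farkas_infeasible:
  fixes R n :: nat
  assumes "\<nexists>v. \<forall>k<R. dotp n (G k) v \<le> c k"
  shows "\<exists>lam. (\<forall>k<R. lam k \<ge> 0) \<and> (\<Sum>k<R. lam k * c k) < 0
           \<and> (\<forall>j<n. (\<Sum>k<R. lam k * G k j) = 0)"
proof -
  have "- 1 * t + dotp n (\<lambda>_. 0) u \<ge> 0"
    if "t \<ge> 0" "\<forall>k<R. dotp n (G k) u \<le> c k * t" for u and t :: real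
  proof -
    have "t \<le> 0"
    proof (rule ccontr)
      assume "\<not> t \<le> 0"
      with that(2) have "\<forall>k<R. dotp n (G k) (\<lambda>j. u j / t) \<le> c k"
        by (simp add: dotp_divide_right divide_le_eq)
      with assms show False by blast
    qed
    then show ?thesis by (simp add: dotp_def)
  qed
  from farkas_homogenized[of R n G c "- 1" "\<lambda>_. 0", OF this] obtain lam0 lam where
    lam: "lam0 \<ge> 0" "\<forall>k<R. lam k \<ge> 0" "- 1 = lam0 + (\<Sum>k<R. lam k * c k)"
      "\<forall>j<n. 0 = (\<Sum>k<R. lam k * - G k j)"
    by blast
  have "(\<Sum>k<R. lam k * G k j) = 0" if "j < n" for j
    using lam(4) that by (simp add: sum_negf)
  with lam show ?thesis by (intro exI[of _ lam]) auto
qed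

lemma matvec_eq_dotp: "matvec n C v k = dotp n (C k) v"
  by (simp add: matvec_def dotp_def)

lemma polyP_truncate:
  assumes "\<forall>k<r. dotp n (C k) v \<le> d k"
  shows "(\<lambda>j. if j < n then v j else 0) \<in> polyP n r C d"
  using assms by (simp add: polyP_def matvec_def dotp_def)

lemma dotp_truncate: "dotp n u (\<lambda>j. if j < n then v j else 0) = dotp n u v"
  by (simp add: dotp_def)

lemma polyP_valid_inequality:
  assumes "polyP n r C d \<noteq> {}" "\<forall>v\<in>polyP n r C d. f0 + dotp n f v \<ge> 0"
  shows "\<exists>lam0 lam. lam0 \<ge> 0 \<and> (\<forall>k<r. lam k \<ge> 0) \<and> f0 = lam0 + (\<Sum>k<r. lam k * d k)
           \<and> (\<forall>j<n. f j = (\<Sum>k<r. lam k * - C k j))"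
proof -
  obtain v0 where "v0 \<in> polyP n r C d" using assms(1) by blast
  then have "\<forall>k<r. dotp n (C k) v0 \<le> d k" by (simp add: polyP_def matvec_eq_dotp)
  then show ?thesis
  proof (rule affine_farkas)
    fix v assume "\<forall>k<r. dotp n (C k) v \<le> d k"
    then show "f0 + dotp n f v \<ge> 0"
      using assms(2) polyP_truncate dotp_truncate by metis
  qed
qed

lemma sum_mult_dotp:
  "(\<Sum>k<R. lam k * dotp n (G k) v) = dotp n (\<lambda>j. \<Sum>k<R. lam k * G k j) v"
  by (simp add: dotp_def sum_distrib_left sum_distrib_right mult.assoc sum.swap[of _ "{..<R}"])

lemma polyP_affine_pos_bounded_away:
  assumes pos: "\<forall>v\<in>polyP n r C d. a0 + dotp n a v > 0"
  obtains e where "e > 0" "\<forall>v\<in>polyP n r C d. a0 + dotp n a v \<ge> e"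
proof -
  define G where "G k = (if k < r then C k else a)" for k
  define c where "c k = (if k < r then d k else - a0)" for k
  have "\<nexists>v. \<forall>k<Suc r. dotp n (G k) v \<le> c k"
  proof
    assume "\<exists>v. \<forall>k<Suc r. dotp n (G k) v \<le> c k"
    then obtain v where v: "\<forall>k<Suc r. dotp n (G k) v \<le> c k" by blast
    have "\<forall>k<r. dotp n (C k) v \<le> d k"
    proof (intro allI impI)
      fix k assume "k < r"
      then show "dotp n (C k) v \<le> d k" using v[rule_format, of k] by (simp add: G_def c_def)
    qed
    then have "a0 + dotp n a v > 0" using pos polyP_truncate dotp_truncate by metis
    moreover have "dotp n a v \<le> - a0" using v[rule_format, of r] by (simp add: G_def c_def)
    ultimately show False by simp
  qed
  then obtain lam where lam: "\<forall>k<Suc r. lam k \<ge> 0" "(\<Sum>k<Suc r. lam k * c k) < 0"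
    "\<forall>j<n. (\<Sum>k<Suc r. lam k * G k j) = 0"
    using affine_farkas_infeasible by blast
  define s where "s = - (\<Sum>k<Suc r. lam k * c k)"
  have bound: "lam r * (a0 + dotp n a v) \<ge> s" if v: "v \<in> polyP n r C d" for v
  proof -
    have "(\<Sum>k<Suc r. lam k * dotp n (G k) v) = 0"
      unfolding sum_mult_dotp using lam(3) by (simp add: dotp_def)
    then have "(\<Sum>k<r. lam k * dotp n (C k) v) = - lam r * dotp n a v"
      by (simp add: G_def)
    moreover have "(\<Sum>k<r. lam k * dotp n (C k) v) \<le> (\<Sum>k<r. lam k * d k)"
      using v lam(1) by (intro sum_mono mult_left_mono) (auto simp: polyP_def matvec_eq_dotp)
    ultimately show ?thesis unfolding s_def by (simp add: c_def algebra_simps)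
  qed
  have "s > 0" using lam(2) s_def by simp
  show ?thesis
  proof (cases "polyP n r C d = {}")
    case True
    then show ?thesis using that[of 1] by simp
  next
    case False
    then obtain v0 where "v0 \<in> polyP n r C d" by blast
    with bound \<open>s > 0\<close> have "lam r \<noteq> 0" by fastforce
    with lam(1) have "lam r > 0" by (simp add: less_le)
    with bound \<open>s > 0\<close> show ?thesis
      using that[of "s / lam r"] by (simp add: pos_divide_le_eq mult.commute)
  qed
qed

lemma dotp_abs_le:
  assumes "\<forall>j<n. \<bar>v j\<bar> \<le> B"
  shows "\<bar>dotp n u v\<bar> \<le> (\<Sum>j<n. \<bar>u j\<bar>) * B"
proof -
  have "\<bar>dotp n u v\<bar> \<le> (\<Sum>j<n. \<bar>u j\<bar> * \<bar>v j\<bar>)"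
    unfolding dotp_def abs_mult[symmetric] by (rule sum_abs)
  also have "\<dots> \<le> (\<Sum>j<n. \<bar>u j\<bar> * B)"
    using assms by (intro sum_mono mult_left_mono) auto
  finally show ?thesis by (simp add: sum_distrib_right)
qed

lemma bdd_affine_image:
  assumes "\<forall>v\<in>V. \<forall>j<n. \<bar>v j\<bar> \<le> B"
  shows "bdd_below ((\<lambda>v. b0 + dotp n b v) ` V)" "bdd_above ((\<lambda>v. b0 + dotp n b v) ` V)"
proof -
  define M where "M = \<bar>b0\<bar> + (\<Sum>j<n. \<bar>b j\<bar>) * B"
  have bound: "\<bar>b0 + dotp n b v\<bar> \<le> M" if "v \<in> V" for v
  proof -
    have "\<bar>dotp n b v\<bar> \<le> (\<Sum>j<n. \<bar>b j\<bar>) * B" using dotp_abs_le assms that by blast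
    then show ?thesis unfolding M_def by linarith
  qed
  show "bdd_below ((\<lambda>v. b0 + dotp n b v) ` V)"
    by (rule bdd_belowI2[where m = "- M"]) (meson bound abs_le_D1 abs_le_D2 minus_le_iff)
  show "bdd_above ((\<lambda>v. b0 + dotp n b v) ` V)"
    by (rule bdd_aboveI2[where M = M]) (meson bound abs_le_D1 abs_le_D2 minus_le_iff)
qed

lemma bdd_ratio_image:
  assumes "\<forall>v\<in>V. \<forall>j<n. \<bar>v j\<bar> \<le> B" "e > 0" "\<forall>v\<in>V. a0 + dotp n a v \<ge> e"
  shows "bdd_below ((\<lambda>v. (b0 + dotp n b v) / (a0 + dotp n a v)) ` V)"
    "bdd_above ((\<lambda>v. (b0 + dotp n b v) / (a0 + dotp n a v)) ` V)"
proof -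
  define M where "M = (\<bar>b0\<bar> + (\<Sum>j<n. \<bar>b j\<bar>) * B) / e"
  have bound: "\<bar>(b0 + dotp n b v) / (a0 + dotp n a v)\<bar> \<le> M" if v: "v \<in> V" for v
  proof -
    have "\<bar>dotp n b v\<bar> \<le> (\<Sum>j<n. \<bar>b j\<bar>) * B" using dotp_abs_le assms(1) v by blast
    then have num: "\<bar>b0 + dotp n b v\<bar> \<le> \<bar>b0\<bar> + (\<Sum>j<n. \<bar>b j\<bar>) * B" by linarith
    have pos: "a0 + dotp n a v > 0" using assms(2,3) v by fastforce
    have "\<bar>(b0 + dotp n b v) / (a0 + dotp n a v)\<bar> = \<bar>b0 + dotp n b v\<bar> / (a0 + dotp n a v)"
      by (rule abs_div_pos[OF pos, symmetric])
    also have "\<dots> \<le> M"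
      unfolding M_def using assms(2,3) v num by (intro frac_le) auto
    finally show ?thesis .
  qed
  show "bdd_below ((\<lambda>v. (b0 + dotp n b v) / (a0 + dotp n a v)) ` V)"
    by (rule bdd_belowI2[where m = "- M"]) (meson bound abs_le_D1 abs_le_D2 minus_le_iff)
  show "bdd_above ((\<lambda>v. (b0 + dotp n b v) / (a0 + dotp n a v)) ` V)"
    by (rule bdd_aboveI2[where M = M]) (meson bound abs_le_D1 abs_le_D2 minus_le_iff)
qed

text \<open>Linearization of \<open>(f0 + f\<^sup>T v) (g0 + g\<^sup>T v)\<close> divided by the denominator \<open>\<delta>\<close>, in the variables
  \<open>rho = 1/\<delta>\<close>, \<open>y = v/\<delta>\<close> and \<open>W = v v\<^sup>T/\<delta>\<close>.\<close>
definition lifted_product ::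
  "nat \<Rightarrow> real \<Rightarrow> (nat \<Rightarrow> real) \<Rightarrow> (nat \<Rightarrow> nat \<Rightarrow> real)
   \<Rightarrow> real \<Rightarrow> (nat \<Rightarrow> real) \<Rightarrow> real \<Rightarrow> (nat \<Rightarrow> real) \<Rightarrow> real" where
  "lifted_product n rho y W f0 f g0 g =
     f0 * g0 * rho + f0 * dotp n g y + g0 * dotp n f y + (\<Sum>j<n. \<Sum>h<n. f j * W j h * g h)"

definition lifted_point ::
  "nat \<Rightarrow> nat \<Rightarrow> (nat \<Rightarrow> nat \<Rightarrow> real) \<Rightarrow> (nat \<Rightarrow> real) \<Rightarrow> real \<Rightarrow> (nat \<Rightarrow> real)
   \<Rightarrow> real \<Rightarrow> (nat \<Rightarrow> real) \<Rightarrow> (nat \<Rightarrow> nat \<Rightarrow> real) \<Rightarrow> (nat \<Rightarrow> real) \<Rightarrow> bool" where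
  "lifted_point n r C d a0 a rho y W x \<longleftrightarrow>
     (\<forall>k<r. \<forall>l<r. lifted_product n rho y W (d k) (\<lambda>j. - C k j) (d l) (\<lambda>j. - C l j) \<ge> 0)
     \<and> (\<forall>k<r. dotp n (C k) y \<le> rho * d k) \<and> rho \<ge> 0
     \<and> a0 * rho + dotp n a y = 1 \<and> (\<forall>j<n. x j = a0 * y j + (\<Sum>h<n. a h * W j h))"

lemma RQP_lifted_point:
  assumes "(rho, y, x) \<in> RQP m n p r C d a0 a" "i < m"
  obtains W where "lifted_point n r C d (a0 i) (a i) (rho i) (y i) W x"
proof -
  from assms obtain W where W:
    "\<forall>k<r. \<forall>l<r. (\<Sum>j<n. \<Sum>h<n. C k j * W i j h * C l h)
       - d k * matvec n C (y i) l - matvec n C (y i) k * d l + rho i * d k * d l \<ge> 0"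
    "a0 i * rho i + dotp n (a i) (y i) = 1" "rho i \<ge> 0"
    "\<forall>j<n. x j = a0 i * y i j + (\<Sum>k<n. a i k * W i j k)"
    "\<forall>k<r. matvec n C (y i) k \<le> rho i * d k"
    unfolding RQP_def by blast
  have "lifted_product n (rho i) (y i) (W i) (d k) (\<lambda>j. - C k j) (d l) (\<lambda>j. - C l j)
        = (\<Sum>j<n. \<Sum>h<n. C k j * W i j h * C l h)
          - d k * matvec n C (y i) l - matvec n C (y i) k * d l + rho i * d k * d l" for k l
    by (simp add: lifted_product_def dotp_def matvec_def sum_negf algebra_simps)
  with W have "lifted_point n r C d (a0 i) (a i) (rho i) (y i) (W i) x"
    unfolding lifted_point_def by (simp add: matvec_eq_dotp mult.commute)
  then show ?thesis by (rule that)
qed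

lemma lifted_product_cong:
  assumes "\<And>j. j < n \<Longrightarrow> f j = f' j" "\<And>j. j < n \<Longrightarrow> g j = g' j"
  shows "lifted_product n rho y W f0 f g0 g = lifted_product n rho y W f0 f' g0 g'"
  using assms by (simp add: lifted_product_def dotp_def)

lemma lifted_product_comb_left:
  "lifted_product n rho y W (lam0 + (\<Sum>k<R. lam k * c k)) (\<lambda>j. \<Sum>k<R. lam k * G k j) g0 g
   = lam0 * lifted_product n rho y W 1 (\<lambda>_. 0) g0 g
     + (\<Sum>k<R. lam k * lifted_product n rho y W (c k) (G k) g0 g)"
  by (simp add: lifted_product_def dotp_def sum.distrib sum_distrib_left sum_distrib_right
      algebra_simps sum.swap[of _ "{..<R}"])

lemma lifted_product_comb_right:
  "lifted_product n rho y W f0 f (mu0 + (\<Sum>l<R. mu l * c l)) (\<lambda>h. \<Sum>l<R. mu l * G l h)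
   = mu0 * lifted_product n rho y W f0 f 1 (\<lambda>_. 0)
     + (\<Sum>l<R. mu l * lifted_product n rho y W f0 f (c l) (G l))"
  by (simp add: lifted_product_def dotp_def sum.distrib sum_distrib_left sum_distrib_right
      algebra_simps sum.swap[of _ "{..<R}"])

text \<open>Expanding both factors in the Farkas certificates reduces the claim to the products of pairs
  of constraints \<open>1 \<ge> 0\<close> and \<open>d\<^sub>k - C\<^sub>k v \<ge> 0\<close>, which are exactly the constraints of a lifted point.\<close>
lemma lifted_product_nonneg:
  assumes pt: "lifted_point n r C d a0 a rho y W x"
    and lam: "lam0 \<ge> 0" "\<forall>k<r. lam k \<ge> 0" "f0 = lam0 + (\<Sum>k<r. lam k * d k)"
      "\<forall>j<n. f j = (\<Sum>k<r. lam k * - C k j)"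
    and mu: "mu0 \<ge> 0" "\<forall>l<r. mu l \<ge> 0" "g0 = mu0 + (\<Sum>l<r. mu l * d l)"
      "\<forall>j<n. g j = (\<Sum>l<r. mu l * - C l j)"
  shows "lifted_product n rho y W f0 f g0 g \<ge> 0"
proof -
  let ?LP = "lifted_product n rho y W"
  let ?row = "\<lambda>k j. - C k j"
  have rho: "rho \<ge> 0" and rows: "\<forall>k<r. dotp n (C k) y \<le> rho * d k"
    and pairs: "\<forall>k<r. \<forall>l<r. ?LP (d k) (?row k) (d l) (?row l) \<ge> 0"
    using pt unfolding lifted_point_def by auto
  have one_row: "?LP 1 (\<lambda>_. 0) (d l) (?row l) \<ge> 0" "?LP (d l) (?row l) 1 (\<lambda>_. 0) \<ge> 0"
    if "l < r" for l
    using rows that by (simp_all add: lifted_product_def dotp_def sum_negf algebra_simps)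
  have g_eq: "?LP h0 h g0 g = mu0 * ?LP h0 h 1 (\<lambda>_. 0) + (\<Sum>l<r. mu l * ?LP h0 h (d l) (?row l))"
    for h0 h
  proof -
    have "?LP h0 h g0 g = ?LP h0 h (mu0 + (\<Sum>l<r. mu l * d l)) (\<lambda>j. \<Sum>l<r. mu l * ?row l j)"
      unfolding mu(3) by (rule lifted_product_cong) (use mu(4) in auto)
    then show ?thesis by (simp only: lifted_product_comb_right)
  qed
  have "?LP 1 (\<lambda>_. 0) g0 g \<ge> 0"
    unfolding g_eq using mu(1,2) one_row rho
    by (intro add_nonneg_nonneg sum_nonneg mult_nonneg_nonneg) (auto simp: lifted_product_def dotp_def)
  moreover have "?LP (d k) (?row k) g0 g \<ge> 0" if "k < r" for k
    unfolding g_eq using mu(1,2) one_row pairs that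
    by (intro add_nonneg_nonneg sum_nonneg mult_nonneg_nonneg) auto
  moreover have "?LP f0 f g0 g = ?LP (lam0 + (\<Sum>k<r. lam k * d k)) (\<lambda>j. \<Sum>k<r. lam k * ?row k j) g0 g"
    unfolding lam(3) by (rule lifted_product_cong) (use lam(4) in auto)
  then have "?LP f0 f g0 g = lam0 * ?LP 1 (\<lambda>_. 0) g0 g + (\<Sum>k<r. lam k * ?LP (d k) (?row k) g0 g)"
    by (simp only: lifted_product_comb_left)
  ultimately show ?thesis
    using lam(1,2) by (auto intro!: add_nonneg_nonneg sum_nonneg mult_nonneg_nonneg)
qed

lemma lifted_product_valid:
  assumes "lifted_point n r C d a0 a rho y W x" "polyP n r C d \<noteq> {}"
    and "\<forall>v\<in>polyP n r C d. f0 + dotp n f v \<ge> 0" "\<forall>v\<in>polyP n r C d. g0 + dotp n g v \<ge> 0"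
  shows "lifted_product n rho y W f0 f g0 g \<ge> 0"
  using polyP_valid_inequality[OF assms(2,3)] polyP_valid_inequality[OF assms(2,4)]
    lifted_product_nonneg[OF assms(1)] by blast

lemma lifted_product_denominator:
  assumes "lifted_point n r C d a0 a rho y W x"
  shows "lifted_product n rho y W f0 f (s * (a0 - c)) (\<lambda>j. s * a j)
         = s * (f0 + dotp n f x - c * (f0 * rho + dotp n f y))"
proof -
  have x: "\<forall>j<n. x j = a0 * y j + (\<Sum>h<n. a h * W j h)" and norm: "dotp n a y = 1 - a0 * rho"
    using assms unfolding lifted_point_def by auto
  have "dotp n f x = (\<Sum>j<n. f j * (a0 * y j + (\<Sum>h<n. a h * W j h)))"
    unfolding dotp_def using x by (intro sum.cong) auto
  then have W: "(\<Sum>j<n. \<Sum>h<n. f j * W j h * (s * a h)) = s * (dotp n f x - a0 * dotp n f y)"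
    by (simp add: dotp_def sum.distrib sum_distrib_left algebra_simps)
  have a: "dotp n (\<lambda>j. s * a j) y = s * (1 - a0 * rho)"
    unfolding norm[symmetric] by (simp add: dotp_def sum_distrib_left mult.assoc)
  show ?thesis unfolding lifted_product_def W a by (simp add: algebra_simps)
qed

lemma mccormick_lifted:
  assumes pt: "lifted_point n r C d a0 a rho y W x" and ne: "polyP n r C d \<noteq> {}"
    and den: "\<forall>v\<in>polyP n r C d. s * (a0 + dotp n a v - c) \<ge> 0"
    and ratio: "\<forall>v\<in>polyP n r C d. t * (b0 + dotp n b v - z * (a0 + dotp n a v)) \<ge> 0"
  shows "s * t * (b0 + dotp n b x - z * (a0 + dotp n a x) - c * (b0 * rho + dotp n b y) + c * z) \<ge> 0"
proof -
  define f0 where "f0 = t * (b0 - z * a0)"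
  define f where "f j = t * (b j - z * a j)" for j
  have f: "f0 + dotp n f v = t * (b0 + dotp n b v - z * (a0 + dotp n a v))" for v
    unfolding f0_def f_def by (simp add: dotp_def sum_distrib_left sum_subtractf algebra_simps)
  have g: "s * (a0 - c) + dotp n (\<lambda>j. s * a j) v = s * (a0 + dotp n a v - c)" for v
    by (simp add: dotp_def sum_distrib_left mult.assoc algebra_simps)
  have "a0 * rho + dotp n a y = 1" using pt unfolding lifted_point_def by blast
  moreover have "f0 * rho + dotp n f y = t * (b0 * rho + dotp n b y - z * (a0 * rho + dotp n a y))"
    unfolding f0_def f_def by (simp add: dotp_def sum_distrib_left sum_subtractf algebra_simps)
  ultimately have "f0 * rho + dotp n f y = t * (b0 * rho + dotp n b y - z)" by simp
  then have "lifted_product n rho y W f0 f (s * (a0 - c)) (\<lambda>j. s * a j)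
      = s * (t * (b0 + dotp n b x - z * (a0 + dotp n a x)) - c * (t * (b0 * rho + dotp n b y - z)))"
    unfolding lifted_product_denominator[OF pt] f[of x] by (rule arg_cong)
  moreover have "lifted_product n rho y W f0 f (s * (a0 - c)) (\<lambda>j. s * a j) \<ge> 0"
    using lifted_product_valid[OF pt ne] den ratio f g by simp
  ultimately show ?thesis by (simp add: algebra_simps)
qed

theorem proposition6:
  fixes m n p r :: nat
    and C :: "nat \<Rightarrow> nat \<Rightarrow> real" and d :: "nat \<Rightarrow> real"
    and a0 :: "nat \<Rightarrow> real" and a :: "nat \<Rightarrow> nat \<Rightarrow> real"
    and i :: nat and bi0 :: real and bi :: "nat \<Rightarrow> real"
    and rho :: "nat \<Rightarrow> real" and y :: "nat \<Rightarrow> nat \<Rightarrow> real" and x :: "nat \<Rightarrow> real"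
    and zL zU dL dU :: real
  assumes "p \<le> n"
    and "contains_box n p r C d"
    and "polyP n r C d \<noteq> {}"
    and "\<exists>B. \<forall>v\<in>polyP n r C d. \<forall>j<n. \<bar>v j\<bar> \<le> B"
    and "\<forall>l<m. \<forall>v\<in>polyP n r C d. a0 l + dotp n (a l) v > 0"
    and "i < m"
    and "zL = (INF v\<in>polyP n r C d. (bi0 + dotp n bi v) / (a0 i + dotp n (a i) v))"
    and "zU = (SUP v\<in>polyP n r C d. (bi0 + dotp n bi v) / (a0 i + dotp n (a i) v))"
    and "dL = (INF v\<in>polyP n r C d. a0 i + dotp n (a i) v)"
    and "dU = (SUP v\<in>polyP n r C d. a0 i + dotp n (a i) v)"
    and "(rho, y, x) \<in> RQP m n p r C d a0 a"
  shows "let zeta = bi0 * rho i + dotp n bi (y i);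
             delta = a0 i + dotp n (a i) x;
             num = bi0 + dotp n bi x
         in num \<ge> zL * delta + dL * zeta - zL * dL
          \<and> num \<ge> zU * delta + dU * zeta - zU * dU
          \<and> num \<le> zU * delta + dL * zeta - zU * dL
          \<and> num \<le> zL * delta + dU * zeta - zL * dU"
proof -
  let ?P = "polyP n r C d"
  let ?den = "\<lambda>v. a0 i + dotp n (a i) v"
  let ?num = "\<lambda>v. bi0 + dotp n bi v"
  obtain W where pt: "lifted_point n r C d (a0 i) (a i) (rho i) (y i) W x"
    using RQP_lifted_point[OF assms(11,6)] .
  obtain B where B: "\<forall>v\<in>?P. \<forall>j<n. \<bar>v j\<bar> \<le> B" using assms(4) by blast
  have pos: "\<forall>v\<in>?P. ?den v > 0" using assms(5,6) by blast
  then obtain e where e: "e > 0" "\<forall>v\<in>?P. ?den v \<ge> e" by (rule polyP_affine_pos_bounded_away)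
  note ratio_bdd = bdd_ratio_image[OF B e, of bi0 bi]
  note den_bdd = bdd_affine_image[OF B, of "a0 i" "a i"]
  have den_lower: "\<forall>v\<in>?P. 1 * (?den v - dL) \<ge> 0"
    unfolding assms(9) using cINF_lower[OF den_bdd(1)] by auto
  have den_upper: "\<forall>v\<in>?P. - 1 * (?den v - dU) \<ge> 0"
    unfolding assms(10) using cSUP_upper[OF _ den_bdd(2)] by auto
  have ratio_lower: "\<forall>v\<in>?P. 1 * (?num v - zL * ?den v) \<ge> 0"
    unfolding assms(7) using cINF_lower[OF ratio_bdd(1)] pos by (auto simp: le_divide_eq)
  have ratio_upper: "\<forall>v\<in>?P. - 1 * (?num v - zU * ?den v) \<ge> 0"
    unfolding assms(8) using cSUP_upper[OF _ ratio_bdd(2)] pos by (auto simp: divide_le_eq)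
  show ?thesis
    using mccormick_lifted[OF pt assms(3) den_lower ratio_lower]
      mccormick_lifted[OF pt assms(3) den_upper ratio_upper]
      mccormick_lifted[OF pt assms(3) den_lower ratio_upper]
      mccormick_lifted[OF pt assms(3) den_upper ratio_lower]
    by (simp add: Let_def algebra_simps)
qed

end
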